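(* Let $p\ge3$ be odd and $\Gamma(v,x)=x^p-pxv^{p-1}+(p-1)v^p$ for $v\in[0,1]$, $x\in[-1,1]$. If $x,y,z\in[-1,1]$ are such that the matrix $\begin{pmatrix}x&z\\ z&y\end{pmatrix}$ is positive semi-definite, then for every $v\in[0,1]$, $$\Gamma(v,x)+\Gamma(v,y)+2\Gamma(v,z)\ge0.$$ *)

theory Defs
  imports Complex_Main
begin

definition Gamma :: "nat \<Rightarrow> real \<Rightarrow> real \<Rightarrow> real" where
  "Gamma p v x = x ^ p - real p * x * v ^ (p - 1) + (real p - 1) * v ^ p"

definition psd2 :: "real \<Rightarrow> real \<Rightarrow> real \<Rightarrow> bool" where
  "psd2 a b c \<longleftrightarrow> (\<forall>s t :: real. a * s^2 + 2 * c * s * t + b * t^2 \<ge> 0)"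

end

theory Submission
  imports Defs
begin

text \<open>For \<open>z \<ge> 0\<close> all three terms are nonnegative by the AM-GM inequality
  \<open>p t v\<^sup>p\<^sup>-\<^sup>1 \<le> t\<^sup>p + (p - 1) v\<^sup>p\<close>. For \<open>z = -w < 0\<close> oddness of \<open>p\<close> gives
  \<open>\<Gamma>(v,z) = 2(p - 1) v\<^sup>p - \<Gamma>(v,w)\<close>, and \<open>w \<le> \<surd>x \<surd>y\<close> by positive semi-definiteness.
  Either \<open>w\<close> lies where \<open>\<Gamma>(v,\<cdot>)\<close> is at most \<open>(p - 1) v\<^sup>p\<close>, or \<open>\<Gamma>(v,w) \<le> \<Gamma>(v,ab)\<close>
  with \<open>a = \<surd>x\<close>, \<open>b = \<surd>y\<close>; in the latter case one uses the identity
  \<open>\<Gamma>(v,a\<^sup>2) + \<Gamma>(v,b\<^sup>2) - 2\<Gamma>(v,ab) = (a\<^sup>p - b\<^sup>p)\<^sup>2 - p v\<^sup>p\<^sup>-\<^sup>1 (a - b)\<^sup>2\<close>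
  and bounds its right-hand side below by \<open>-4(p - 1) v\<^sup>p\<close>.\<close>

lemma power_AM_GM:
  fixes t v :: real
  assumes "0 \<le> t" "0 \<le> v" "p \<ge> 1"
  shows "real p * t * v ^ (p - 1) \<le> t ^ p + (real p - 1) * v ^ p"
proof (cases "v = 0")
  case True
  then show ?thesis using assms
    by (cases "p = 1") (auto simp: power_0_left)
next
  case False
  with assms have v: "v > 0" by auto
  obtain q where q: "p = Suc q" using assms by (cases p) auto
  have "1 + real p * (t / v - 1) \<le> (1 + (t / v - 1)) ^ p"
    by (rule Bernoulli_inequality) (use assms v in simp)
  hence "(1 + real p * (t / v - 1)) * v ^ p \<le> (t / v) ^ p * v ^ p"
    by (intro mult_right_mono) (use v in auto)
  also have "\<dots> = t ^ p" using v by (simp add: power_divide)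
  also have "(1 + real p * (t / v - 1)) * v ^ p = real p * t * v ^ (p - 1) - (real p - 1) * v ^ p"
    using v unfolding q by (simp add: field_simps)
  finally show ?thesis by simp
qed

lemma Gamma_nonneg:
  assumes "0 \<le> t" "0 \<le> v" "p \<ge> 1"
  shows "0 \<le> Gamma p v t"
  using power_AM_GM[OF assms] unfolding Gamma_def by simp

lemma Gamma_minus_odd:
  assumes "odd p"
  shows "Gamma p v (- w) = 2 * (real p - 1) * v ^ p - Gamma p v w"
  unfolding Gamma_def using assms by (simp add: power_minus_odd algebra_simps)

lemma diff_mult_power_le_power_diff:
  fixes a b :: real
  assumes "0 \<le> b" "b \<le> a" "p \<ge> 1"
  shows "(a - b) * a ^ (p - 1) \<le> a ^ p - b ^ p"
    and "(a - b) * b ^ (p - 1) \<le> a ^ p - b ^ p"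
proof -
  obtain q where q: "p = Suc q" using assms by (cases p) auto
  have "b * b ^ q \<le> b * a ^ q"
    using assms by (intro mult_left_mono power_mono) auto
  thus "(a - b) * a ^ (p - 1) \<le> a ^ p - b ^ p" unfolding q by (simp add: algebra_simps)
  moreover have "(a - b) * b ^ (p - 1) \<le> (a - b) * a ^ (p - 1)"
    using assms by (intro mult_left_mono power_mono) auto
  ultimately show "(a - b) * b ^ (p - 1) \<le> a ^ p - b ^ p" by linarith
qed

lemma Gamma_le_small:
  assumes "0 \<le> w" "w ^ (p - 1) \<le> real p * v ^ (p - 1)" "p \<ge> 1"
  shows "Gamma p v w \<le> (real p - 1) * v ^ p"
proof -
  obtain q where q: "p = Suc q" using assms by (cases p) auto
  have "w * w ^ (p - 1) \<le> w * (real p * v ^ (p - 1))"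
    using assms by (intro mult_left_mono)
  thus ?thesis unfolding Gamma_def q by (simp add: algebra_simps)
qed

lemma Gamma_mono_large:
  assumes "0 \<le> w" "w \<le> u" "real p * v ^ (p - 1) \<le> w ^ (p - 1)" "p \<ge> 1"
  shows "Gamma p v w \<le> Gamma p v u"
proof -
  have "(u - w) * (real p * v ^ (p - 1)) \<le> (u - w) * w ^ (p - 1)"
    using assms by (intro mult_left_mono) auto
  also have "\<dots> \<le> u ^ p - w ^ p"
    using assms by (intro diff_mult_power_le_power_diff(2))
  finally show ?thesis unfolding Gamma_def by (simp add: algebra_simps)
qed

lemma Gamma_square_sum_diff:
  "Gamma p v (a\<^sup>2) + Gamma p v (b\<^sup>2) - 2 * Gamma p v (a * b)
     = (a ^ p - b ^ p)\<^sup>2 - real p * v ^ (p - 1) * (a - b)\<^sup>2"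
  unfolding Gamma_def by (simp add: power_mult_distrib power2_eq_square algebra_simps)

lemma power_diff_square_lower_bound:
  fixes a b v :: real
  assumes "0 \<le> b" "b \<le> a" "0 \<le> v" "p \<ge> 1"
  shows "- 4 * (real p - 1) * v ^ p \<le> (a ^ p - b ^ p)\<^sup>2 - real p * v ^ (p - 1) * (a - b)\<^sup>2"
proof -
  define m where "m = real p * v ^ (p - 1)"
  define c where "c = (a ^ (p - 1))\<^sup>2"
  have "(a - b) * a ^ (p - 1) \<le> a ^ p - b ^ p"
    using assms by (intro diff_mult_power_le_power_diff(1))
  hence "((a - b) * a ^ (p - 1))\<^sup>2 \<le> (a ^ p - b ^ p)\<^sup>2"
    using assms by (intro power_mono) auto
  hence A: "(a - b)\<^sup>2 * c \<le> (a ^ p - b ^ p)\<^sup>2"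
    by (simp add: c_def power_mult_distrib)
  have c0: "0 \<le> (real p - 1) * v ^ p" using assms by simp
  show ?thesis
  proof (cases "m \<le> c")
    case True
    hence "m * (a - b)\<^sup>2 \<le> (a - b)\<^sup>2 * c" by (simp add: mult.commute mult_right_mono)
    with A c0 show ?thesis unfolding m_def by linarith
  next
    case False
    \<comment> \<open>Then \<open>(a - b)\<^sup>2 c - m (a - b)\<^sup>2\<close> is decreasing in \<open>(a - b)\<^sup>2 \<le> a\<^sup>2\<close>, and at \<open>a\<^sup>2\<close> it
        equals \<open>\<Gamma>(v,a\<^sup>2) - (p - 1) v\<^sup>p\<close>.\<close>
    have "(a - b)\<^sup>2 \<le> a\<^sup>2" using assms by (intro power_mono) auto
    hence "a\<^sup>2 * (c - m) \<le> (a - b)\<^sup>2 * (c - m)"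
      using False by (intro mult_right_mono_neg) auto
    moreover have "a\<^sup>2 * c = (a\<^sup>2) ^ p"
    proof -
      have "a\<^sup>2 * c = (a ^ (p - 1) * a)\<^sup>2" by (simp add: c_def power_mult_distrib)
      also have "\<dots> = (a ^ p)\<^sup>2" using assms by (subst power_minus_mult) auto
      finally show ?thesis by (simp add: power_mult[symmetric] mult.commute)
    qed
    moreover have "0 \<le> Gamma p v (a\<^sup>2)" using assms by (intro Gamma_nonneg) auto
    ultimately show ?thesis
      using A c0 unfolding Gamma_def m_def by (simp add: algebra_simps)
  qed
qed

lemma Gamma_square_sum_lower_bound:
  fixes a b v :: real
  assumes "0 \<le> a" "0 \<le> b" "0 \<le> v" "p \<ge> 1"
  shows "2 * Gamma p v (a * b) \<le> Gamma p v (a\<^sup>2) + Gamma p v (b\<^sup>2) + 4 * (real p - 1) * v ^ p"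
proof (cases "b \<le> a")
  case True
  then show ?thesis
    using power_diff_square_lower_bound[of b a v p] assms Gamma_square_sum_diff[of p v a b]
    by linarith
next
  case False
  have swap: "(b ^ p - a ^ p)\<^sup>2 = (a ^ p - b ^ p)\<^sup>2" "(b - a)\<^sup>2 = (a - b)\<^sup>2" "b * a = a * b"
    by (simp_all add: power2_commute mult.commute)
  from False show ?thesis
    using power_diff_square_lower_bound[of a b v p, unfolded swap] assms
      Gamma_square_sum_diff[of p v b a, unfolded swap]
    by linarith
qed

lemma Gamma_le_geometric_mean:
  fixes a b v w :: real
  assumes "0 \<le> a" "0 \<le> b" "0 \<le> v" "0 \<le> w" "w \<le> a * b" "p \<ge> 1"
  shows "2 * Gamma p v w \<le> Gamma p v (a\<^sup>2) + Gamma p v (b\<^sup>2) + 4 * (real p - 1) * v ^ p"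
proof (cases "w ^ (p - 1) \<le> real p * v ^ (p - 1)")
  case True
  with assms have "Gamma p v w \<le> (real p - 1) * v ^ p" by (intro Gamma_le_small)
  moreover have "0 \<le> Gamma p v (a\<^sup>2)" "0 \<le> Gamma p v (b\<^sup>2)" "0 \<le> (real p - 1) * v ^ p"
    using assms by (auto intro: Gamma_nonneg)
  ultimately show ?thesis by linarith
next
  case False
  with assms have "Gamma p v w \<le> Gamma p v (a * b)" by (intro Gamma_mono_large) auto
  with Gamma_square_sum_lower_bound[OF assms(1-3,6)] show ?thesis by linarith
qed

lemma psd2D:
  assumes "psd2 x y z"
  shows "0 \<le> x" "0 \<le> y" "z\<^sup>2 \<le> x * y"
proof -
  note q = assms[unfolded psd2_def, rule_format]
  show x: "0 \<le> x" using q[of 1 0] by simp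
  show y: "0 \<le> y" using q[of 0 1] by simp
  have "0 \<le> x * (x * y - z\<^sup>2)" using q[of z "-x"] by (simp add: power2_eq_square algebra_simps)
  moreover have "0 \<le> y * (x * y - z\<^sup>2)" using q[of y "-z"] by (simp add: power2_eq_square algebra_simps)
  moreover have "0 \<le> x + y * z\<^sup>2 - 2 * z\<^sup>2" using q[of 1 "-z"] by (simp add: power2_eq_square algebra_simps)
  ultimately show "z\<^sup>2 \<le> x * y"
    using x y by (cases "x = 0 \<and> y = 0") (auto simp: zero_le_mult_iff)
qed

theorem mainTheorem16:
  fixes p :: nat and x y z v :: real
  assumes "odd p" and "p \<ge> 3"
    and "x \<in> {-1..1}" and "y \<in> {-1..1}" and "z \<in> {-1..1}"
    and "psd2 x y z"
    and "v \<in> {0..1}"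
  shows "Gamma p v x + Gamma p v y + 2 * Gamma p v z \<ge> 0"
proof -
  have p: "p \<ge> 1" and v: "0 \<le> v" using assms by auto
  have x: "0 \<le> x" and y: "0 \<le> y" and zxy: "z\<^sup>2 \<le> x * y" using psd2D[OF assms(6)] by auto
  show ?thesis
  proof (cases "0 \<le> z")
    case True
    then show ?thesis using x y v p by (simp add: Gamma_nonneg)
  next
    case False
    have "- z \<le> sqrt x * sqrt y"
      using zxy by (simp add: real_le_rsqrt real_sqrt_mult[symmetric])
    hence "2 * Gamma p v (- z) \<le> Gamma p v x + Gamma p v y + 4 * (real p - 1) * v ^ p"
      using Gamma_le_geometric_mean[of "sqrt x" "sqrt y" v "- z" p] False x y v p by simp
    then show ?thesis using Gamma_minus_odd[OF assms(1), of v z] by linarith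
  qed
qed

end
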